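(* Let $(X,S)$ be an $S$-metric space, $r\ge0$, $\{x_n\}$ a sequence in $X$, and $\{x_{n_p}\}_{p\in\mathbb N}$ a subsequence (with $n_1<n_2<\cdots$) such that $\delta(\{n_1,n_2,\dots\})=1$. Then $st\text{-}LIM^r x_n\subseteq st\text{-}LIM^r x_{n_p}$.
   Context: An $S$-metric on a nonempty set $X$ is a function $S:X^3\to[0,\infty)$ such that for all $x,y,z,a\in X$: $S(x,y,z)=0$ if and only if $x=y=z$, and $S(x,y,z)\le S(x,x,a)+S(y,y,a)+S(z,z,a)$. For $B\subset\mathbb N$ the natural density is $\delta(B)=\lim_{n\to\infty}\frac{|\{k\in B:k\le n\}|}{n}$ when the limit exists. For $r\ge0$, a sequence $\{y_n\}$ is $r$-statistically convergent to $x$ if for every $\varepsilon>0$, $\delta(\{n\in\mathbb N: S(y_n,y_n,x)\ge r+\varepsilon\})=0$; $st\text{-}LIM^r y_n$ denotes the set of all such $x\in X$. *)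

theory Defs
  imports "HOL-Analysis.Analysis"
begin

definition S_metric :: "'a set \<Rightarrow> ('a \<Rightarrow> 'a \<Rightarrow> 'a \<Rightarrow> real) \<Rightarrow> bool" where
  "S_metric X S \<longleftrightarrow> X \<noteq> {} \<and>
     (\<forall>x\<in>X. \<forall>y\<in>X. \<forall>z\<in>X. S x y z \<ge> 0) \<and>
     (\<forall>x\<in>X. \<forall>y\<in>X. \<forall>z\<in>X. S x y z = 0 \<longleftrightarrow> x = y \<and> y = z) \<and>
     (\<forall>x\<in>X. \<forall>y\<in>X. \<forall>z\<in>X. \<forall>a\<in>X. S x y z \<le> S x x a + S y y a + S z z a)"

text \<open>Natural density of B, a subset of the positive integers (only elements 1..n are counted).\<close>
definition has_natural_density :: "nat set \<Rightarrow> real \<Rightarrow> bool" where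
  "has_natural_density B d \<longleftrightarrow>
     (\<lambda>n. real (card {k \<in> B. 1 \<le> k \<and> k \<le> n}) / real n) \<longlonglongrightarrow> d"

definition st_LIM :: "'a set \<Rightarrow> ('a \<Rightarrow> 'a \<Rightarrow> 'a \<Rightarrow> real) \<Rightarrow> real \<Rightarrow> (nat \<Rightarrow> 'a) \<Rightarrow> 'a set" where
  "st_LIM X S r y = {x \<in> X. \<forall>\<epsilon>>0.
      has_natural_density {n. 1 \<le> n \<and> S (y n) (y n) x \<ge> r + \<epsilon>} 0}"

end

theory Submission
  imports Defs
begin

text \<open>
  If the indices \<open>n\<^sub>p\<close> have positive density \<open>d\<close>, then \<open>n\<^sub>p \<le> 2p/d\<close> for large \<open>p\<close>.
  Hence the number of \<open>p \<le> m\<close> with \<open>n\<^sub>p \<in> A\<close> is at most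
  \<open>|A \<inter> [1, n\<^sub>m]| \<le> (2m/d) \<cdot> |A \<inter> [1, n\<^sub>m]| / n\<^sub>m\<close>, so density zero is preserved by
  pulling back along the subsequence. Applied to the sets \<open>{n. S(x\<^sub>n, x\<^sub>n, z) \<ge> r + \<epsilon>}\<close>
  this gives the inclusion.
\<close>

abbreviation count_upto :: "nat set \<Rightarrow> nat \<Rightarrow> nat" where
  "count_upto B n \<equiv> card {k \<in> B. 1 \<le> k \<and> k \<le> n}"

lemma has_natural_density_cong:
  assumes "\<And>k. 1 \<le> k \<Longrightarrow> k \<in> A \<longleftrightarrow> k \<in> B"
  shows "has_natural_density A d \<longleftrightarrow> has_natural_density B d"
proof -
  have "\<And>n. {k \<in> A. 1 \<le> k \<and> k \<le> n} = {k \<in> B. 1 \<le> k \<and> k \<le> n}"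
    using assms by blast
  then show ?thesis unfolding has_natural_density_def by simp
qed

lemma count_upto_range_le:
  assumes "strict_mono ns"
  shows "count_upto (ns ` {1..}) (ns n) \<le> n"
proof -
  have "{k \<in> ns ` {1..}. 1 \<le> k \<and> k \<le> ns n} \<subseteq> ns ` {1..n}"
    using assms by (auto simp: strict_mono_less_eq)
  then have "count_upto (ns ` {1..}) (ns n) \<le> card (ns ` {1..n})"
    by (intro card_mono) auto
  also have "\<dots> \<le> n"
    using card_image_le[of "{1..n}" ns] by simp
  finally show ?thesis .
qed

lemma count_upto_preimage_le:
  assumes "strict_mono ns"
  shows "count_upto (ns -` A) n \<le> count_upto A (ns n)"
proof -
  have "count_upto (ns -` A) n = card (ns ` {k \<in> ns -` A. 1 \<le> k \<and> k \<le> n})"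
    using card_image[OF strict_mono_imp_inj_on[OF assms]] by simp
  also have "\<dots> \<le> count_upto A (ns n)"
  proof (intro card_mono)
    have "\<And>p. p \<le> ns p" using assms by (rule strict_mono_imp_increasing)
    then show "ns ` {k \<in> ns -` A. 1 \<le> k \<and> k \<le> n} \<subseteq> {k \<in> A. 1 \<le> k \<and> k \<le> ns n}"
      using assms by (force simp: strict_mono_less_eq intro: order_trans)
  qed simp
  finally show ?thesis .
qed

lemma eventually_mult_le_of_density:
  assumes "strict_mono ns" "has_natural_density (ns ` {1..}) d" "c < d"
  shows "\<forall>\<^sub>F n in sequentially. c * real (ns n) \<le> real n"
proof -
  let ?ratio = "\<lambda>m. real (count_upto (ns ` {1..}) m) / real m"
  have "(\<lambda>n. ?ratio (ns n)) \<longlonglongrightarrow> d"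
    using LIMSEQ_subseq_LIMSEQ[OF assms(2)[unfolded has_natural_density_def] assms(1)]
    by (simp add: o_def)
  then have "\<forall>\<^sub>F n in sequentially. c < ?ratio (ns n)"
    using assms(3) by (rule order_tendstoD)
  then show ?thesis
  proof eventually_elim
    case (elim n)
    show ?case
    proof (cases "ns n = 0")
      case False
      then have "c * real (ns n) < real (count_upto (ns ` {1..}) (ns n))"
        using elim by (simp add: field_simps)
      also have "\<dots> \<le> real n"
        using count_upto_range_le[OF assms(1)] by simp
      finally show ?thesis by simp
    qed simp
  qed
qed

lemma has_natural_density_zero_preimage:
  assumes "strict_mono ns" "has_natural_density (ns ` {1..}) d" "0 < d"
    and "has_natural_density A 0"
  shows "has_natural_density (ns -` A) 0"
proof -
  let ?ratio = "\<lambda>B m. real (count_upto B m) / real m"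
  have "(\<lambda>n. ?ratio A (ns n)) \<longlonglongrightarrow> 0"
    using LIMSEQ_subseq_LIMSEQ[OF assms(4)[unfolded has_natural_density_def] assms(1)]
    by (simp add: o_def)
  then have bound_lim: "(\<lambda>n. 2 / d * ?ratio A (ns n)) \<longlonglongrightarrow> 0"
    by (rule tendsto_mult_right_zero)
  have "\<forall>\<^sub>F n in sequentially. d / 2 * real (ns n) \<le> real n"
    using assms(3) by (intro eventually_mult_le_of_density[OF assms(1,2)]) simp
  then have "\<forall>\<^sub>F n in sequentially. ?ratio (ns -` A) n \<le> 2 / d * ?ratio A (ns n)"
    using eventually_ge_at_top[of 1]
  proof eventually_elim
    case (elim n)
    have pos: "0 < real (ns n)"
      using elim strict_mono_imp_increasing[OF assms(1), of n] by simp
    have "?ratio (ns -` A) n \<le> real (count_upto A (ns n)) / real n"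
      using count_upto_preimage_le[OF assms(1)] elim by (simp add: divide_right_mono)
    also have "\<dots> \<le> real (count_upto A (ns n)) / (d / 2 * real (ns n))"
      using elim pos assms(3) by (intro divide_left_mono) auto
    also have "\<dots> = 2 / d * ?ratio A (ns n)"
      by (simp add: field_simps)
    finally show ?case .
  qed
  then have "?ratio (ns -` A) \<longlonglongrightarrow> 0"
    by (intro tendsto_sandwich[OF _ _ tendsto_const bound_lim]) auto
  then show ?thesis unfolding has_natural_density_def .
qed

theorem theorem4p7:
  fixes X :: "'a set" and S :: "'a \<Rightarrow> 'a \<Rightarrow> 'a \<Rightarrow> real"
    and r :: real and x :: "nat \<Rightarrow> 'a" and ns :: "nat \<Rightarrow> nat"
  assumes "S_metric X S"
    and "r \<ge> 0"
    and "\<And>n. x n \<in> X"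
    and "strict_mono ns"
    and "\<And>p. 1 \<le> p \<Longrightarrow> 1 \<le> ns p"
    and "has_natural_density (ns ` {1..}) 1"
  shows "st_LIM X S r x \<subseteq> st_LIM X S r (\<lambda>p. x (ns p))"
proof
  fix z assume z: "z \<in> st_LIM X S r x"
  show "z \<in> st_LIM X S r (\<lambda>p. x (ns p))"
    unfolding st_LIM_def
  proof (intro CollectI conjI allI impI)
    show "z \<in> X" using z by (simp add: st_LIM_def)
    fix e :: real assume "e > 0"
    let ?far = "{n. 1 \<le> n \<and> S (x n) (x n) z \<ge> r + e}"
    have "has_natural_density ?far 0"
      using z \<open>e > 0\<close> by (simp add: st_LIM_def)
    then have "has_natural_density (ns -` ?far) 0"
      by (rule has_natural_density_zero_preimage[OF assms(4,6) zero_less_one])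
    moreover have "has_natural_density {p. 1 \<le> p \<and> S (x (ns p)) (x (ns p)) z \<ge> r + e} 0
        \<longleftrightarrow> has_natural_density (ns -` ?far) 0"
      using assms(5) by (intro has_natural_density_cong) auto
    ultimately show "has_natural_density {p. 1 \<le> p \<and> S (x (ns p)) (x (ns p)) z \<ge> r + e} 0"
      by simp
  qed
qed

end
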